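(* In generalized non-signalling theory (box world), let $X$ and $Y$ be systems (each consisting of one or more boxes), let $M_X$ be a maximally informative measurement on $X$ and $M_Y$ a maximally informative measurement on $Y$. Then the product measurement $M_X\otimes M_Y$ is a maximally informative measurement on the composite system $XY$.
   Context: Box world (GNST): a box has a finite set of inputs and outputs. A system of $n$ boxes has states given by all collections $p(\mathbf{a}|\mathbf{x})\ge0$ (output tuple $\mathbf{a}$, input tuple $\mathbf{x}$) that are normalized ($\sum_{\mathbf{a}}p(\mathbf{a}|\mathbf{x})=1$ for all $\mathbf{x}$) and no-signalling (for each $i$, $\sum_{a_i}p(\mathbf{a}|\mathbf{x})$ is independent of $x_i$). An effect is any linear map $\mu$ from states to $[0,1]$; a vector $\mathbf{R}$ indexed by $(\mathbf{a},\mathbf{x})$ represents $\mu$ if $\mu(\mathbf{p})=\sum p(\mathbf{a}|\mathbf{x})R(\mathbf{a}|\mathbf{x})$ for all states. A measurement is a finite set $\{(r,\mu_r)\}$ of effects summing to the constant map $1$. If $M_X$ has effects $\mu_r$ represented by $\mathbf{R}_r$ and $M_Y$ has effects $\nu_s$ represented by $\mathbf{S}_s$, then $M_X\otimes M_Y$ is the measurement on $XY$ with outcomes $(r,s)$ and effects represented by the tensor products $\mathbf{R}_r\otimes\mathbf{S}_s$ (performing $M_X$ on $X$ and $M_Y$ on $Y$ independently). A measurement $N=\{(s,\nu_s)\}$ refines $M=\{(r,\mu_r)\}$ if the outcomes of $N$ can be partitioned into sets $P_r$ with $\mu_r=\sum_{s\in P_r}\nu_s$; the refinement is trivial if $\nu_s\propto\mu_r$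 whenever $s\in P_r$. A measurement is maximally informative if it has no non-trivial refinement. *)

theory Defs
  imports Complex_Main
begin

(* A system of boxes: list of boxes, box i = (number of inputs, number of outputs);
   inputs of box i are {0..<fst(sys!i)}, outputs {0..<snd(sys!i)}.
   Composite system XY = X @ Y. *)
type_synonym system = "(nat \<times> nat) list"

(* Vectors indexed by (output tuple a, input tuple x); states p a x = p(a|x). *)
type_synonym vec = "nat list \<Rightarrow> nat list \<Rightarrow> real"

definition inputs :: "system \<Rightarrow> nat list set" where
  "inputs sys = {x. length x = length sys \<and> (\<forall>i<length sys. x ! i < fst (sys ! i))}"

definition outputs :: "system \<Rightarrow> nat list set" where
  "outputs sys = {a. length a = length sys \<and> (\<forall>i<length sys. a ! i < snd (sys ! i))}"

definition index_set :: "system \<Rightarrow> (nat list \<times> nat list) set" where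
  "index_set sys = outputs sys \<times> inputs sys"

definition states :: "system \<Rightarrow> vec set" where
  "states sys = {p.
     (\<forall>a\<in>outputs sys. \<forall>x\<in>inputs sys. 0 \<le> p a x) \<and>
     (\<forall>x\<in>inputs sys. (\<Sum>a\<in>outputs sys. p a x) = 1) \<and>
     (\<forall>i<length sys. \<forall>a\<in>outputs sys. \<forall>x\<in>inputs sys. \<forall>x'\<in>inputs sys.
        (\<forall>j. j \<noteq> i \<longrightarrow> x ! j = x' ! j) \<longrightarrow>
        (\<Sum>b<snd (sys ! i). p (a[i := b]) x) = (\<Sum>b<snd (sys ! i). p (a[i := b]) x'))}"

definition pair :: "system \<Rightarrow> vec \<Rightarrow> vec \<Rightarrow> real" where
  "pair sys R p = (\<Sum>(a, x)\<in>index_set sys. p a x * R a x)"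

definition represents :: "system \<Rightarrow> vec \<Rightarrow> (vec \<Rightarrow> real) \<Rightarrow> bool" where
  "represents sys R \<mu> \<longleftrightarrow> (\<forall>p\<in>states sys. \<mu> p = pair sys R p)"

(* effect: linear map from states to [0,1] (linearity = representability by a vector) *)
definition is_effect :: "system \<Rightarrow> (vec \<Rightarrow> real) \<Rightarrow> bool" where
  "is_effect sys \<mu> \<longleftrightarrow> (\<exists>R. represents sys R \<mu>) \<and>
     (\<forall>p\<in>states sys. 0 \<le> \<mu> p \<and> \<mu> p \<le> 1)"

definition measurement :: "system \<Rightarrow> 'r set \<Rightarrow> ('r \<Rightarrow> vec \<Rightarrow> real) \<Rightarrow> bool" where
  "measurement sys Os \<mu> \<longleftrightarrow> finite Os \<and> (\<forall>r\<in>Os. is_effect sys (\<mu> r)) \<and>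
     (\<forall>p\<in>states sys. (\<Sum>r\<in>Os. \<mu> r p) = 1)"

definition refines_via :: "system \<Rightarrow> 's set \<Rightarrow> ('s \<Rightarrow> vec \<Rightarrow> real) \<Rightarrow> ('s \<Rightarrow> 'r)
      \<Rightarrow> 'r set \<Rightarrow> ('r \<Rightarrow> vec \<Rightarrow> real) \<Rightarrow> bool" where
  "refines_via sys Ns \<nu> f Os \<mu> \<longleftrightarrow> (\<forall>s\<in>Ns. f s \<in> Os) \<and>
     (\<forall>r\<in>Os. \<forall>p\<in>states sys. \<mu> r p = (\<Sum>s\<in>{s\<in>Ns. f s = r}. \<nu> s p))"

definition trivial_refinement :: "system \<Rightarrow> 's set \<Rightarrow> ('s \<Rightarrow> vec \<Rightarrow> real) \<Rightarrow> ('s \<Rightarrow> 'r)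
      \<Rightarrow> ('r \<Rightarrow> vec \<Rightarrow> real) \<Rightarrow> bool" where
  "trivial_refinement sys Ns \<nu> f \<mu> \<longleftrightarrow>
     (\<forall>s\<in>Ns. \<exists>c::real. \<forall>p\<in>states sys. \<nu> s p = c * \<mu> (f s) p)"

(* refining measurements are taken with outcomes labelled by naturals (w.l.o.g.,
   any finite outcome set can be relabelled) *)
definition max_informative :: "system \<Rightarrow> 'r set \<Rightarrow> ('r \<Rightarrow> vec \<Rightarrow> real) \<Rightarrow> bool" where
  "max_informative sys Os \<mu> \<longleftrightarrow> measurement sys Os \<mu> \<and>
     (\<forall>(Ns::nat set) \<nu> f. measurement sys Ns \<nu> \<and> refines_via sys Ns \<nu> f Os \<mu> \<longrightarrow>
        trivial_refinement sys Ns \<nu> f \<mu>)"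

definition tensor :: "system \<Rightarrow> vec \<Rightarrow> vec \<Rightarrow> vec" where
  "tensor X R S = (\<lambda>a x. R (take (length X) a) (take (length X) x) *
                         S (drop (length X) a) (drop (length X) x))"

definition prod_meas_effects :: "system \<Rightarrow> system \<Rightarrow> ('r \<Rightarrow> vec) \<Rightarrow> ('s \<Rightarrow> vec)
      \<Rightarrow> ('r \<times> 's) \<Rightarrow> vec \<Rightarrow> real" where
  "prod_meas_effects X Y R S = (\<lambda>(r, s) p. pair (X @ Y) (tensor X (R r) (S s)) p)"

end

theory Submission
  imports Defs
begin

text \<open>
  Product states \<open>p \<otimes> q\<close> span the state space of \<open>XY\<close>, so a linear functional on it is
  determined by its values on them. Let \<open>\<phi>\<close> be an effect of a refinement of \<open>M\<^sub>X \<otimes> M\<^sub>Y\<close>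
  lying below \<open>\<mu>\<^sub>r \<otimes> \<nu>\<^sub>s\<close>. For fixed \<open>q\<close>, \<open>p \<mapsto> \<phi>(p \<otimes> q)\<close> is an effect on \<open>X\<close>
  below \<open>\<mu>\<^sub>r\<close>; splitting it off the outcome \<open>r\<close> refines \<open>M\<^sub>X\<close>, so by maximality it is
  proportional to \<open>\<mu>\<^sub>r\<close>, and symmetrically in \<open>q\<close>. Hence \<open>\<phi> = c (\<mu>\<^sub>r \<otimes> \<nu>\<^sub>s)\<close> on
  product states, and therefore on all states.
\<close>

definition tuples :: "((nat \<times> nat) \<Rightarrow> nat) \<Rightarrow> system \<Rightarrow> nat list set" where
  "tuples f sys = {a. length a = length sys \<and> (\<forall>i<length sys. a ! i < f (sys ! i))}"

lemma outputs_eq_tuples: "outputs sys = tuples snd sys"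
  by (simp add: outputs_def tuples_def)

lemma inputs_eq_tuples: "inputs sys = tuples fst sys"
  by (simp add: inputs_def tuples_def)

lemma finite_tuples: "finite (tuples f sys)"
proof -
  let ?A = "\<Union>i<length sys. {..<f (sys ! i)}"
  have "tuples f sys \<subseteq> {xs. set xs \<subseteq> ?A \<and> length xs = length sys}"
    by (auto simp: tuples_def in_set_conv_nth; blast)
  moreover have "finite {xs. set xs \<subseteq> ?A \<and> length xs = length sys}"
    by (rule finite_lists_length_eq) auto
  ultimately show ?thesis
    by (rule finite_subset)
qed

lemma finite_outputs [simp]: "finite (outputs sys)"
  by (simp add: outputs_eq_tuples finite_tuples)

lemma finite_inputs [simp]: "finite (inputs sys)"
  by (simp add: inputs_eq_tuples finite_tuples)

lemma length_outputs: "a \<in> outputs sys \<Longrightarrow> length a = length sys"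
  by (simp add: outputs_def)

lemma length_inputs: "x \<in> inputs sys \<Longrightarrow> length x = length sys"
  by (simp add: inputs_def)

lemma append_in_tuples: "a \<in> tuples f X \<Longrightarrow> b \<in> tuples f Y \<Longrightarrow> a @ b \<in> tuples f (X @ Y)"
  by (auto simp: tuples_def nth_append)

lemma take_drop_in_tuples:
  assumes c: "c \<in> tuples f (X @ Y)"
  shows "take (length X) c \<in> tuples f X" and "drop (length X) c \<in> tuples f Y"
proof -
  have len: "length c = length X + length Y"
    and bound: "\<And>i. i < length X + length Y \<Longrightarrow> c ! i < f ((X @ Y) ! i)"
    using c by (auto simp: tuples_def)
  have "take (length X) c ! i < f (X ! i)" if "i < length X" for i
    using bound[of i] that by (simp add: nth_append)
  then show "take (length X) c \<in> tuples f X"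
    using len by (simp add: tuples_def)
  have "drop (length X) c ! i < f (Y ! i)" if "i < length Y" for i
    using bound[of "length X + i"] that len by (simp add: nth_append)
  then show "drop (length X) c \<in> tuples f Y"
    using len by (simp add: tuples_def)
qed

lemma tuples_append: "tuples f (X @ Y) = (\<lambda>(a, b). a @ b) ` (tuples f X \<times> tuples f Y)"
proof
  show "tuples f (X @ Y) \<subseteq> (\<lambda>(a, b). a @ b) ` (tuples f X \<times> tuples f Y)"
  proof
    fix c assume c: "c \<in> tuples f (X @ Y)"
    have "c = (\<lambda>(a, b). a @ b) (take (length X) c, drop (length X) c)"
      by simp
    then show "c \<in> (\<lambda>(a, b). a @ b) ` (tuples f X \<times> tuples f Y)"
      using take_drop_in_tuples[OF c] by blast
  qed
qed (auto intro: append_in_tuples)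

lemma sum_tuples_append:
  "(\<Sum>c\<in>tuples f (X @ Y). g c) = (\<Sum>a\<in>tuples f X. \<Sum>b\<in>tuples f Y. g (a @ b))"
proof -
  have "inj_on (\<lambda>(a, b). a @ b) (tuples f X \<times> tuples f Y)"
    by (auto simp: inj_on_def tuples_def)
  then have "sum g (tuples f (X @ Y)) = (\<Sum>(a, b)\<in>tuples f X \<times> tuples f Y. g (a @ b))"
    by (simp add: tuples_append sum.reindex case_prod_unfold)
  then show ?thesis
    by (simp add: sum.cartesian_product)
qed

lemma sum_outputs_append:
  "(\<Sum>c\<in>outputs (X @ Y). g c) = (\<Sum>a\<in>outputs X. \<Sum>b\<in>outputs Y. g (a @ b))"
  by (simp add: outputs_eq_tuples sum_tuples_append)

lemma sum_inputs_append:
  "(\<Sum>c\<in>inputs (X @ Y). g c) = (\<Sum>a\<in>inputs X. \<Sum>b\<in>inputs Y. g (a @ b))"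
  by (simp add: inputs_eq_tuples sum_tuples_append)

lemma append_in_outputs: "a \<in> outputs X \<Longrightarrow> b \<in> outputs Y \<Longrightarrow> a @ b \<in> outputs (X @ Y)"
  by (simp add: outputs_eq_tuples append_in_tuples)

lemma append_in_inputs: "x \<in> inputs X \<Longrightarrow> y \<in> inputs Y \<Longrightarrow> x @ y \<in> inputs (X @ Y)"
  by (simp add: inputs_eq_tuples append_in_tuples)

lemma take_drop_in_outputs:
  "c \<in> outputs (X @ Y) \<Longrightarrow> take (length X) c \<in> outputs X \<and> drop (length X) c \<in> outputs Y"
  by (simp add: outputs_eq_tuples take_drop_in_tuples)

lemma take_drop_in_inputs:
  "z \<in> inputs (X @ Y) \<Longrightarrow> take (length X) z \<in> inputs X \<and> drop (length X) z \<in> inputs Y"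
  by (simp add: inputs_eq_tuples take_drop_in_tuples)

lemma outputs_singleton: "outputs [B] = (\<lambda>b. [b]) ` {..<snd B}"
proof
  show "outputs [B] \<subseteq> (\<lambda>b. [b]) ` {..<snd B}"
  proof
    fix a assume a: "a \<in> outputs [B]"
    then have "length a = 1" "a ! 0 < snd B"
      by (auto simp: outputs_def)
    moreover from \<open>length a = 1\<close> have "a = [a ! 0]"
      by (cases a) auto
    ultimately show "a \<in> (\<lambda>b. [b]) ` {..<snd B}"
      by blast
  qed
qed (auto simp: outputs_def)

lemma pair_eq_sum_sum: "pair sys V P = (\<Sum>a\<in>outputs sys. \<Sum>x\<in>inputs sys. P a x * V a x)"
  by (simp add: pair_def index_set_def sum.cartesian_product)

lemma pair_append: "pair (X @ Y) V P =
  (\<Sum>a\<in>outputs X. \<Sum>x\<in>inputs X. \<Sum>b\<in>outputs Y. \<Sum>y\<in>inputs Y. P (a @ b) (x @ y) * V (a @ b) (x @ y))"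
  unfolding pair_eq_sum_sum sum_outputs_append sum_inputs_append
  by (rule sum.cong[OF refl], rule sum.swap)

lemma pair_cong:
  "(\<And>c z. c \<in> outputs sys \<Longrightarrow> z \<in> inputs sys \<Longrightarrow> P c z = P' c z) \<Longrightarrow> pair sys V P = pair sys V P'"
  by (auto simp: pair_def index_set_def intro!: sum.cong)

lemma pair_diff: "pair sys V (\<lambda>c z. P c z - P' c z) = pair sys V P - pair sys V P'"
  by (simp add: pair_def case_prod_beta left_diff_distrib sum_subtractf)

lemma pair_scale: "pair sys V (\<lambda>c z. t * P c z) = t * pair sys V P"
  by (simp add: pair_def case_prod_beta sum_distrib_left mult.assoc)

lemma pair_divide: "pair sys V (\<lambda>c z. P c z / t) = pair sys V P / t"
  by (simp add: pair_def sum_divide_distrib case_prod_beta)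

lemma pair_sum: "pair sys V (\<lambda>c z. \<Sum>i\<in>I. F i c z) = (\<Sum>i\<in>I. pair sys V (F i))"
  by (simp add: pair_def case_prod_beta sum_distrib_right sum.swap[of _ I])

lemma pair_diff_vector: "pair sys (\<lambda>c z. V c z - V' c z) P = pair sys V P - pair sys V' P"
  by (simp add: pair_def case_prod_beta right_diff_distrib sum_subtractf)

lemma pair_scale_vector: "pair sys (\<lambda>c z. t * V c z) P = t * pair sys V P"
  by (simp add: pair_def case_prod_beta sum_distrib_left algebra_simps)

lemma pair_sum_vector: "pair sys (\<lambda>c z. \<Sum>i\<in>I. F i c z) P = (\<Sum>i\<in>I. pair sys (F i) P)"
  by (simp add: pair_def case_prod_beta sum_distrib_left sum.swap[of _ I])

lemma pair_input_indicator:
  assumes "z0 \<in> inputs sys"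
  shows "pair sys (\<lambda>c z. if z = z0 then 1 else 0) P = (\<Sum>c\<in>outputs sys. P c z0)"
  unfolding pair_eq_sum_sum using assms by (simp add: if_distrib[of "\<lambda>u. _ * u"] cong: if_cong)

lemma represents_diff:
  "represents sys V \<phi> \<Longrightarrow> represents sys V' \<psi> \<Longrightarrow>
    represents sys (\<lambda>c z. V c z - V' c z) (\<lambda>p. \<phi> p - \<psi> p)"
  by (simp add: represents_def pair_diff_vector)

lemma tensor_append:
  "length a = length X \<Longrightarrow> length x = length X \<Longrightarrow> tensor X p q (a @ b) (x @ y) = p a x * q b y"
  by (simp add: tensor_def)

lemma tensor_assoc: "tensor (X @ Y) (tensor X p q) r = tensor X p (tensor Y q r)"
  by (simp add: tensor_def take_take drop_take drop_drop mult.assoc add.commute)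

lemma pair_tensor_tensor: "pair (X @ Y) (tensor X R S) (tensor X p q) = pair X R p * pair Y S q"
proof -
  have "pair (X @ Y) (tensor X R S) (tensor X p q) =
      (\<Sum>a\<in>outputs X. \<Sum>x\<in>inputs X. \<Sum>b\<in>outputs Y. \<Sum>y\<in>inputs Y. (p a x * R a x) * (q b y * S b y))"
    unfolding pair_append
    by (intro sum.cong refl) (simp add: tensor_append length_outputs length_inputs mult_ac)
  also have "\<dots> = (\<Sum>a\<in>outputs X. \<Sum>x\<in>inputs X. (p a x * R a x) * pair Y S q)"
    by (simp only: pair_eq_sum_sum sum_distrib_left)
  finally show ?thesis
    by (simp only: pair_eq_sum_sum sum_distrib_right)
qed

lemma pair_tensor_vector:
  "pair (X @ Y) (tensor X R S) P = pair X R (\<lambda>a x. pair Y S (\<lambda>b y. P (a @ b) (x @ y)))"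
  apply (subst pair_append, subst pair_eq_sum_sum, subst pair_eq_sum_sum)
  apply (rule sum.cong[OF refl])+
  apply (simp add: tensor_append length_outputs length_inputs sum_distrib_left sum_distrib_right mult_ac)
  done

lemma pair_tensor_as_pair_left: "pair (X @ Y) V (tensor X p q) =
    pair X (\<lambda>a x. \<Sum>b\<in>outputs Y. \<Sum>y\<in>inputs Y. V (a @ b) (x @ y) * q b y) p"
  apply (subst pair_append, subst pair_eq_sum_sum)
  apply (rule sum.cong[OF refl])+
  apply (simp add: tensor_append length_outputs length_inputs sum_distrib_left mult_ac)
  done

lemma sum_swap_nested:
  "(\<Sum>a\<in>A. \<Sum>x\<in>I. \<Sum>b\<in>B. \<Sum>y\<in>J. f a x b y) = (\<Sum>b\<in>B. \<Sum>y\<in>J. \<Sum>a\<in>A. \<Sum>x\<in>I. f a x b y)"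
proof -
  have "(\<Sum>a\<in>A. \<Sum>x\<in>I. \<Sum>b\<in>B. \<Sum>y\<in>J. f a x b y) = (\<Sum>a\<in>A. \<Sum>b\<in>B. \<Sum>y\<in>J. \<Sum>x\<in>I. f a x b y)"
    by (simp only: sum.swap[of _ I B] sum.swap[of _ I J])
  also have "\<dots> = (\<Sum>b\<in>B. \<Sum>y\<in>J. \<Sum>a\<in>A. \<Sum>x\<in>I. f a x b y)"
    by (simp only: sum.swap[of _ A B] sum.swap[of _ A J])
  finally show ?thesis .
qed

lemma pair_tensor_as_pair_right: "pair (X @ Y) V (tensor X p q) =
    pair Y (\<lambda>b y. \<Sum>a\<in>outputs X. \<Sum>x\<in>inputs X. V (a @ b) (x @ y) * p a x) q"
proof -
  have "pair (X @ Y) V (tensor X p q) = (\<Sum>a\<in>outputs X. \<Sum>x\<in>inputs X. \<Sum>b\<in>outputs Y. \<Sum>y\<in>inputs Y.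
      q b y * (V (a @ b) (x @ y) * p a x))"
    unfolding pair_append
    by (intro sum.cong refl) (simp add: tensor_append length_outputs length_inputs)
  also have "\<dots> = (\<Sum>b\<in>outputs Y. \<Sum>y\<in>inputs Y. \<Sum>a\<in>outputs X. \<Sum>x\<in>inputs X.
      q b y * (V (a @ b) (x @ y) * p a x))"
    by (rule sum_swap_nested)
  finally show ?thesis
    by (simp only: pair_eq_sum_sum sum_distrib_left)
qed

definition no_signalling :: "system \<Rightarrow> vec \<Rightarrow> bool" where
  "no_signalling sys p \<longleftrightarrow> (\<forall>i<length sys. \<forall>a\<in>outputs sys. \<forall>x\<in>inputs sys. \<forall>x'\<in>inputs sys.
     (\<forall>j. j \<noteq> i \<longrightarrow> x ! j = x' ! j) \<longrightarrow>
     (\<Sum>b<snd (sys ! i). p (a[i := b]) x) = (\<Sum>b<snd (sys ! i). p (a[i := b]) x'))"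

definition scaled_state :: "system \<Rightarrow> vec \<Rightarrow> real \<Rightarrow> bool" where
  "scaled_state sys p t \<longleftrightarrow> 0 \<le> t \<and> (\<forall>a\<in>outputs sys. \<forall>x\<in>inputs sys. 0 \<le> p a x) \<and>
     (\<forall>x\<in>inputs sys. (\<Sum>a\<in>outputs sys. p a x) = t) \<and> no_signalling sys p"

lemma states_iff_scaled_state: "p \<in> states sys \<longleftrightarrow> scaled_state sys p 1"
  by (simp add: states_def scaled_state_def no_signalling_def)

lemma no_signallingD:
  "no_signalling sys p \<Longrightarrow> i < length sys \<Longrightarrow> a \<in> outputs sys \<Longrightarrow> x \<in> inputs sys \<Longrightarrow>
    x' \<in> inputs sys \<Longrightarrow> \<forall>j. j \<noteq> i \<longrightarrow> x ! j = x' ! j \<Longrightarrow>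
    (\<Sum>b<snd (sys ! i). p (a[i := b]) x) = (\<Sum>b<snd (sys ! i). p (a[i := b]) x')"
  unfolding no_signalling_def by blast

lemma no_signalling_sum:
  assumes "\<And>j. j \<in> J \<Longrightarrow> no_signalling sys (F j)"
  shows "no_signalling sys (\<lambda>a x. \<Sum>j\<in>J. F j a x)"
  unfolding no_signalling_def
proof (intro allI impI ballI)
  fix i a x x' assume h: "i < length sys" "a \<in> outputs sys" "x \<in> inputs sys" "x' \<in> inputs sys"
    "\<forall>j. j \<noteq> i \<longrightarrow> x ! j = x' ! j"
  have "(\<Sum>b<snd (sys ! i). \<Sum>j\<in>J. F j (a[i := b]) x) = (\<Sum>j\<in>J. \<Sum>b<snd (sys ! i). F j (a[i := b]) x)"
    by (rule sum.swap)
  also have "\<dots> = (\<Sum>j\<in>J. \<Sum>b<snd (sys ! i). F j (a[i := b]) x')"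
    using assms h by (intro sum.cong refl no_signallingD) auto
  also have "\<dots> = (\<Sum>b<snd (sys ! i). \<Sum>j\<in>J. F j (a[i := b]) x')"
    by (rule sum.swap)
  finally show "(\<Sum>b<snd (sys ! i). \<Sum>j\<in>J. F j (a[i := b]) x) =
      (\<Sum>b<snd (sys ! i). \<Sum>j\<in>J. F j (a[i := b]) x')" .
qed

lemma sum_outputs_split_coordinate:
  assumes i: "i < length sys" and k: "0 < snd (sys ! i)"
  shows "(\<Sum>a\<in>outputs sys. g a) =
    (\<Sum>a\<in>{a\<in>outputs sys. a ! i = 0}. \<Sum>b<snd (sys ! i). g (a[i := b]))"
proof -
  let ?A = "{a\<in>outputs sys. a ! i = 0}" and ?k = "snd (sys ! i)"
  let ?h = "\<lambda>(a, b). a[i := b]"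
  have inj: "inj_on ?h (?A \<times> {..<?k})"
  proof (rule inj_onI, clarify)
    fix a b a' b'
    assume a: "a \<in> outputs sys" "a ! i = 0" and a': "a' \<in> outputs sys" "a' ! i = 0"
      and eq: "a[i := b] = a'[i := b']"
    have "b = b'"
      using arg_cong[OF eq, of "\<lambda>l. l ! i"] i a a' by (simp add: length_outputs)
    moreover have "a = a'"
      by (metis a(2) a'(2) eq list_update_id list_update_overwrite)
    ultimately show "a = a' \<and> b = b'"
      by simp
  qed
  have img: "?h ` (?A \<times> {..<?k}) = outputs sys"
  proof
    show "?h ` (?A \<times> {..<?k}) \<subseteq> outputs sys"
      by (auto simp: outputs_def nth_list_update) (metis nth_list_update_eq nth_list_update_neq)
    show "outputs sys \<subseteq> ?h ` (?A \<times> {..<?k})"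
    proof
      fix c assume c: "c \<in> outputs sys"
      have "c = ?h (c[i := 0], c ! i)"
        by simp
      moreover have "c[i := 0] \<in> ?A" and "c ! i < ?k"
        using c k i by (auto simp: outputs_def nth_list_update)
      ultimately show "c \<in> ?h ` (?A \<times> {..<?k})"
        by blast
    qed
  qed
  have "(\<Sum>a\<in>outputs sys. g a) = (\<Sum>(a, b)\<in>?A \<times> {..<?k}. g (a[i := b]))"
    using sum.reindex[OF inj, of g] img by (simp add: case_prod_unfold)
  then show ?thesis
    by (simp add: sum.cartesian_product)
qed

lemma no_signalling_total_eq_coordinate:
  assumes ns: "no_signalling sys p" and i: "i < length sys"
    and x: "x \<in> inputs sys" and x': "x' \<in> inputs sys"
    and agree: "\<forall>j. j \<noteq> i \<longrightarrow> x ! j = x' ! j"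
  shows "(\<Sum>a\<in>outputs sys. p a x) = (\<Sum>a\<in>outputs sys. p a x')"
proof (cases "snd (sys ! i) = 0")
  case True
  then have "outputs sys = {}"
    using i by (auto simp: outputs_def)
  then show ?thesis
    by simp
next
  case False
  then show ?thesis
    using no_signallingD[OF ns i _ x x' agree]
    by (simp add: sum_outputs_split_coordinate[OF i])
qed

text \<open>Indexing beyond the length yields the same unspecified element for lists of equal length.\<close>

lemma nth_eq_beyond_length: "length xs = length ys \<Longrightarrow> length xs \<le> j \<Longrightarrow> xs ! j = ys ! j"
  by (induct xs ys arbitrary: j rule: list_induct2) (auto simp: nth_Cons split: nat.split)

text \<open>Changing the inputs one box at a time.\<close>

lemma no_signalling_total_eq:
  assumes ns: "no_signalling sys p" and x: "x \<in> inputs sys" and x': "x' \<in> inputs sys"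
  shows "(\<Sum>a\<in>outputs sys. p a x) = (\<Sum>a\<in>outputs sys. p a x')"
proof -
  let ?n = "length sys"
  define z where "z j = map (\<lambda>i. if i < j then x' ! i else x ! i) [0..<?n]" for j
  have len: "length x = ?n" "length x' = ?n"
    using x x' by (auto simp: inputs_def)
  have z_inputs: "z j \<in> inputs sys" for j
    using x x' by (auto simp: inputs_def z_def)
  have "z 0 = x"
    using len map_nth[of x] by (simp add: z_def)
  moreover have "z ?n = x'"
    using len by (intro nth_equalityI) (simp_all add: z_def)
  moreover have "(\<Sum>a\<in>outputs sys. p a x) = (\<Sum>a\<in>outputs sys. p a (z j))" if "j \<le> ?n" for j
    using that
  proof (induct j)
    case 0
    then show ?case
      by (simp add: \<open>z 0 = x\<close>)
  next
    case (Suc j)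
    have "\<forall>k. k \<noteq> j \<longrightarrow> z j ! k = z (Suc j) ! k"
    proof (intro allI impI)
      fix k assume "k \<noteq> j"
      show "z j ! k = z (Suc j) ! k"
      proof (cases "k < ?n")
        case True
        then show ?thesis
          using \<open>k \<noteq> j\<close> by (simp add: z_def)
      next
        case False
        then show ?thesis
          by (intro nth_eq_beyond_length) (simp_all add: z_def)
      qed
    qed
    moreover have "j < ?n"
      using Suc by simp
    ultimately have "(\<Sum>a\<in>outputs sys. p a (z j)) = (\<Sum>a\<in>outputs sys. p a (z (Suc j)))"
      using no_signalling_total_eq_coordinate[OF ns _ z_inputs z_inputs] by blast
    with Suc show ?case
      by simp
  qed
  ultimately show ?thesis
    by (metis order_refl)
qed

lemma agree_except_take:
  assumes "\<forall>j. j \<noteq> i \<longrightarrow> z ! j = z' ! j" "length z = length z'"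
  shows "\<forall>j. j \<noteq> i \<longrightarrow> take n z ! j = take n z' ! j"
proof (intro allI impI)
  fix j assume "j \<noteq> i"
  show "take n z ! j = take n z' ! j"
  proof (cases "j < length (take n z)")
    case True
    then show ?thesis
      using assms \<open>j \<noteq> i\<close> by simp
  next
    case False
    then show ?thesis
      using assms by (intro nth_eq_beyond_length) auto
  qed
qed

lemma agree_except_drop:
  assumes "\<forall>j. j \<noteq> i \<longrightarrow> z ! j = z' ! j" "length z = length z'" "n \<le> i" "n \<le> length z"
  shows "\<forall>j. j \<noteq> i - n \<longrightarrow> drop n z ! j = drop n z' ! j"
proof (intro allI impI)
  fix j assume "j \<noteq> i - n"
  show "drop n z ! j = drop n z' ! j"
  proof (cases "j < length (drop n z)")
    case True
    then show ?thesis
      using assms \<open>j \<noteq> i - n\<close> by (simp add: nth_drop)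
  next
    case False
    then show ?thesis
      using assms by (intro nth_eq_beyond_length) auto
  qed
qed

lemma no_signalling_tensor:
  assumes p: "no_signalling X p" and q: "no_signalling Y q"
  shows "no_signalling (X @ Y) (tensor X p q)"
  unfolding no_signalling_def
proof (intro allI impI ballI)
  let ?n = "length X"
  fix i c z z'
  assume i: "i < length (X @ Y)" and c: "c \<in> outputs (X @ Y)" and z: "z \<in> inputs (X @ Y)"
    and z': "z' \<in> inputs (X @ Y)" and agree: "\<forall>j. j \<noteq> i \<longrightarrow> z ! j = z' ! j"
  have len: "length z = length z'" "?n \<le> length z"
    using z z' by (simp_all add: length_inputs)
  have c_split: "take ?n c \<in> outputs X" "drop ?n c \<in> outputs Y"
    using take_drop_in_outputs[OF c] by auto
  have z_split: "take ?n z \<in> inputs X" "drop ?n z \<in> inputs Y"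
    "take ?n z' \<in> inputs X" "drop ?n z' \<in> inputs Y"
    using take_drop_in_inputs[OF z] take_drop_in_inputs[OF z'] by auto
  show "(\<Sum>b<snd ((X @ Y) ! i). tensor X p q (c[i := b]) z) =
      (\<Sum>b<snd ((X @ Y) ! i). tensor X p q (c[i := b]) z')"
  proof (cases "i < ?n")
    case True
    have "drop ?n z = drop ?n z'"
      using agree len True by (intro nth_equalityI) auto
    moreover have "(\<Sum>b<snd (X ! i). p ((take ?n c)[i := b]) (take ?n z)) =
        (\<Sum>b<snd (X ! i). p ((take ?n c)[i := b]) (take ?n z'))"
      using True c_split z_split agree_except_take[OF agree len(1)]
      by (intro no_signallingD[OF p]) auto
    ultimately show ?thesis
      using True by (simp add: tensor_def nth_append take_update_swap flip: sum_distrib_right)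
  next
    case False
    have "take ?n z = take ?n z'"
      using agree len False by (intro nth_equalityI) auto
    moreover have "(\<Sum>b<snd (Y ! (i - ?n)). q ((drop ?n c)[i - ?n := b]) (drop ?n z)) =
        (\<Sum>b<snd (Y ! (i - ?n)). q ((drop ?n c)[i - ?n := b]) (drop ?n z'))"
      using False i c_split z_split agree_except_drop[OF agree len(1) _ len(2)]
      by (intro no_signallingD[OF q]) auto
    ultimately show ?thesis
      using False by (simp add: tensor_def nth_append drop_update_swap flip: sum_distrib_left)
  qed
qed

lemma tensor_in_states:
  assumes p: "p \<in> states X" and q: "q \<in> states Y"
  shows "tensor X p q \<in> states (X @ Y)"
proof -
  have p': "scaled_state X p 1" and q': "scaled_state Y q 1"
    using p q by (simp_all add: states_iff_scaled_state)
  have "0 \<le> tensor X p q c z" if "c \<in> outputs (X @ Y)" "z \<in> inputs (X @ Y)" for c z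
    using take_drop_in_outputs[OF that(1)] take_drop_in_inputs[OF that(2)] p' q'
    by (auto simp: tensor_def scaled_state_def)
  moreover have "(\<Sum>c\<in>outputs (X @ Y). tensor X p q c z) = 1" if z: "z \<in> inputs (X @ Y)" for z
  proof -
    have "(\<Sum>c\<in>outputs (X @ Y). tensor X p q c z) =
        (\<Sum>a\<in>outputs X. p a (take (length X) z)) * (\<Sum>b\<in>outputs Y. q b (drop (length X) z))"
      unfolding sum_outputs_append sum_product
      by (intro sum.cong refl) (simp add: tensor_def length_outputs)
    then show ?thesis
      using take_drop_in_inputs[OF z] p' q' by (simp add: scaled_state_def)
  qed
  moreover have "no_signalling (X @ Y) (tensor X p q)"
    using p' q' by (intro no_signalling_tensor) (simp_all add: scaled_state_def)
  ultimately show ?thesis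
    by (simp add: states_iff_scaled_state scaled_state_def)
qed

lemma no_signalling_slice_right:
  assumes ns: "no_signalling (X @ Y) P" and a: "a \<in> outputs X" and x: "x \<in> inputs X"
  shows "no_signalling Y (\<lambda>b y. P (a @ b) (x @ y))"
  unfolding no_signalling_def
proof (intro allI impI ballI)
  fix i b y y'
  assume i: "i < length Y" and b: "b \<in> outputs Y" and y: "y \<in> inputs Y" and y': "y' \<in> inputs Y"
    and agree: "\<forall>j. j \<noteq> i \<longrightarrow> y ! j = y' ! j"
  let ?n = "length X"
  have len: "length a = ?n" "length x = ?n"
    using a x by (simp_all add: length_outputs length_inputs)
  have "\<forall>j. j \<noteq> ?n + i \<longrightarrow> (x @ y) ! j = (x @ y') ! j"
    using agree len by (auto simp: nth_append)
  then have "(\<Sum>c<snd ((X @ Y) ! (?n + i)). P ((a @ b)[?n + i := c]) (x @ y)) =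
      (\<Sum>c<snd ((X @ Y) ! (?n + i)). P ((a @ b)[?n + i := c]) (x @ y'))"
    using i by (intro no_signallingD[OF ns _ append_in_outputs[OF a b]
          append_in_inputs[OF x y] append_in_inputs[OF x y']]) simp_all
  then show "(\<Sum>c<snd (Y ! i). P (a @ b[i := c]) (x @ y)) = (\<Sum>c<snd (Y ! i). P (a @ b[i := c]) (x @ y'))"
    using len by (simp add: nth_append list_update_append)
qed

lemma no_signalling_slice_left:
  assumes ns: "no_signalling (X @ Y) P" and b: "b \<in> outputs Y" and y: "y \<in> inputs Y"
  shows "no_signalling X (\<lambda>a x. P (a @ b) (x @ y))"
  unfolding no_signalling_def
proof (intro allI impI ballI)
  fix i a x x'
  assume i: "i < length X" and a: "a \<in> outputs X" and x: "x \<in> inputs X" and x': "x' \<in> inputs X"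
    and agree: "\<forall>j. j \<noteq> i \<longrightarrow> x ! j = x' ! j"
  have len: "length a = length X" "length x = length X" "length x' = length X"
    using a x x' by (simp_all add: length_outputs length_inputs)
  have "\<forall>j. j \<noteq> i \<longrightarrow> (x @ y) ! j = (x' @ y) ! j"
    using agree len by (auto simp: nth_append)
  then have "(\<Sum>c<snd ((X @ Y) ! i). P ((a @ b)[i := c]) (x @ y)) =
      (\<Sum>c<snd ((X @ Y) ! i). P ((a @ b)[i := c]) (x' @ y))"
    using i by (intro no_signallingD[OF ns _ append_in_outputs[OF a b]
          append_in_inputs[OF x y] append_in_inputs[OF x' y]]) simp_all
  then show "(\<Sum>c<snd (X ! i). P (a[i := c] @ b) (x @ y)) = (\<Sum>c<snd (X ! i). P (a[i := c] @ b) (x' @ y))"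
    using len i by (simp add: nth_append list_update_append)
qed

lemma ex_scaled_state_if_no_signalling:
  assumes "\<And>a x. a \<in> outputs sys \<Longrightarrow> x \<in> inputs sys \<Longrightarrow> 0 \<le> p a x"
    and ns: "no_signalling sys p"
  shows "\<exists>t. scaled_state sys p t"
proof (cases "inputs sys = {}")
  case True
  then show ?thesis
    using assms by (auto simp: scaled_state_def)
next
  case False
  then obtain x0 where x0: "x0 \<in> inputs sys"
    by blast
  have "\<forall>x\<in>inputs sys. (\<Sum>a\<in>outputs sys. p a x) = (\<Sum>a\<in>outputs sys. p a x0)"
    using no_signalling_total_eq[OF ns _ x0] by blast
  moreover have "0 \<le> (\<Sum>a\<in>outputs sys. p a x0)"
    using assms(1) x0 by (simp add: sum_nonneg)
  ultimately have "scaled_state sys p (\<Sum>a\<in>outputs sys. p a x0)"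
    unfolding scaled_state_def using assms by blast
  then show ?thesis
    by blast
qed

lemma scaled_state_slice_right:
  assumes "P \<in> states (X @ Y)" "a \<in> outputs X" "x \<in> inputs X"
  shows "\<exists>t. scaled_state Y (\<lambda>b y. P (a @ b) (x @ y)) t"
  using assms append_in_outputs append_in_inputs no_signalling_slice_right[of X Y P a x]
  by (intro ex_scaled_state_if_no_signalling) (auto simp: states_iff_scaled_state scaled_state_def)

lemma scaled_state_divide_in_states:
  assumes p: "scaled_state sys p t" and t: "0 < t"
  shows "(\<lambda>a x. p a x / t) \<in> states sys"
proof -
  have "no_signalling sys (\<lambda>a x. p a x / t)"
    unfolding no_signalling_def
  proof (intro allI impI ballI)
    fix i a x x' assume "i < length sys" "a \<in> outputs sys" "x \<in> inputs sys" "x' \<in> inputs sys"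
      "\<forall>j. j \<noteq> i \<longrightarrow> x ! j = x' ! j"
    then have "(\<Sum>b<snd (sys ! i). p (a[i := b]) x) = (\<Sum>b<snd (sys ! i). p (a[i := b]) x')"
      using p by (intro no_signallingD) (auto simp: scaled_state_def)
    then show "(\<Sum>b<snd (sys ! i). p (a[i := b]) x / t) = (\<Sum>b<snd (sys ! i). p (a[i := b]) x' / t)"
      by (simp flip: sum_divide_distrib)
  qed
  then show ?thesis
    using p t by (simp add: states_iff_scaled_state scaled_state_def flip: sum_divide_distrib)
qed

lemma pair_scaled_state_zero:
  assumes "scaled_state sys p 0"
  shows "pair sys V p = 0"
proof -
  have "p a x = 0" if "a \<in> outputs sys" "x \<in> inputs sys" for a x
    using assms that sum_nonneg_eq_0_iff[of "outputs sys" "\<lambda>a. p a x"]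
    by (auto simp: scaled_state_def)
  then show ?thesis
    by (auto simp: pair_def index_set_def intro!: sum.neutral)
qed

lemma pair_scaled_state_eq_0:
  assumes "\<And>q. q \<in> states sys \<Longrightarrow> pair sys V q = 0" and p: "scaled_state sys p t"
  shows "pair sys V p = 0"
proof (cases "t = 0")
  case True
  then show ?thesis
    using p pair_scaled_state_zero by simp
next
  case False
  then have "0 < t"
    using p by (simp add: scaled_state_def)
  then have "pair sys V p / t = 0"
    using assms scaled_state_divide_in_states[OF p] by (simp flip: pair_divide)
  then show ?thesis
    using \<open>0 < t\<close> by simp
qed

lemma effect_scaled_state_bounds:
  assumes e: "is_effect sys \<mu>" and R: "represents sys R \<mu>" and p: "scaled_state sys p t"
  shows "0 \<le> pair sys R p \<and> pair sys R p \<le> t"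
proof (cases "t = 0")
  case True
  then show ?thesis
    using p pair_scaled_state_zero by simp
next
  case False
  then have t: "0 < t"
    using p by (simp add: scaled_state_def)
  have "(\<lambda>a x. p a x / t) \<in> states sys"
    using scaled_state_divide_in_states[OF p t] .
  then have "0 \<le> pair sys R p / t \<and> pair sys R p / t \<le> 1"
    using e R by (auto simp: is_effect_def represents_def pair_divide)
  then show ?thesis
    using t by (simp add: divide_le_eq_1 zero_le_divide_iff)
qed

section \<open>Product states span the state space\<close>

lemma single_box_in_states:
  assumes "\<And>a x. a \<in> outputs [B] \<Longrightarrow> x \<in> inputs [B] \<Longrightarrow> 0 \<le> p a x"
    and norm: "\<And>x. x \<in> inputs [B] \<Longrightarrow> (\<Sum>a\<in>outputs [B]. p a x) = 1"
  shows "p \<in> states [B]"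
proof -
  have sum_single: "(\<Sum>b<snd B. p [b] x) = (\<Sum>a\<in>outputs [B]. p a x)" for x
    by (simp add: outputs_singleton sum.reindex inj_on_def)
  have "no_signalling [B] p"
    unfolding no_signalling_def
  proof (intro allI impI ballI)
    fix i a x x' assume "i < length [B]" "a \<in> outputs [B]" "x \<in> inputs [B]" "x' \<in> inputs [B]"
    moreover from this have "i = 0" "length a = 1"
      by (simp_all add: length_outputs)
    moreover from this have "a[i := b] = [b]" for b
      by (cases a) auto
    ultimately show "(\<Sum>b<snd ([B] ! i). p (a[i := b]) x) = (\<Sum>b<snd ([B] ! i). p (a[i := b]) x')"
      by (simp add: sum_single norm)
  qed
  then show ?thesis
    using assms by (simp add: states_iff_scaled_state scaled_state_def)
qed

definition det_box :: "nat list \<Rightarrow> nat list \<Rightarrow> nat list \<Rightarrow> vec" where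
  "det_box a0 x' a' = (\<lambda>a x. if a = (if x = x' then a' else a0) then 1 else 0)"

lemma det_box_in_states:
  assumes "a0 \<in> outputs [B]" "a' \<in> outputs [B]"
  shows "det_box a0 x' a' \<in> states [B]"
  using assms by (intro single_box_in_states) (auto simp: det_box_def)

text \<open>
  In the decomposition below, the terms with \<open>x' = x\<close> pick out \<open>P(aw|xv)\<close>, while each of the \<open>|inputs X| - 1\<close>
  inputs \<open>x' \<noteq> x\<close> contributes the marginal of \<open>P\<close> on \<open>W\<close>, which by no-signalling does not
  depend on \<open>x'\<close>.
\<close>

lemma state_decomposition:
  assumes P: "P \<in> states (X @ W)" and x0: "x0 \<in> inputs X"
    and a: "a \<in> outputs X" and x: "x \<in> inputs X" and w: "w \<in> outputs W" and v: "v \<in> inputs W"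
  shows "P (a @ w) (x @ v) =
    (\<Sum>x'\<in>inputs X. \<Sum>a'\<in>outputs X. det_box a0 x' a' a x * P (a' @ w) (x' @ v)) -
    real (card (inputs X) - 1) * (det_box a0 x0 a0 a x * (\<Sum>a'\<in>outputs X. P (a' @ w) (x0 @ v)))"
proof -
  let ?O = "outputs X" and ?I = "inputs X"
  have ns: "no_signalling X (\<lambda>a x. P (a @ w) (x @ v))"
    using P w v by (intro no_signalling_slice_left) (simp_all add: states_iff_scaled_state scaled_state_def)
  have "(\<Sum>a'\<in>?O. det_box a0 x a' a x * P (a' @ w) (x @ v)) = P (a @ w) (x @ v)"
    using a by (simp add: det_box_def if_distrib[of "\<lambda>u. u * _"] cong: if_cong)
  moreover have "(\<Sum>a'\<in>?O. det_box a0 x' a' a x * P (a' @ w) (x' @ v)) =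
      det_box a0 x0 a0 a x * (\<Sum>a'\<in>?O. P (a' @ w) (x0 @ v))" if "x' \<in> ?I - {x}" for x'
    using that no_signalling_total_eq[OF ns _ x0, of x']
    by (auto simp: det_box_def sum_distrib_left)
  ultimately have "(\<Sum>x'\<in>?I. \<Sum>a'\<in>?O. det_box a0 x' a' a x * P (a' @ w) (x' @ v)) =
      P (a @ w) (x @ v) + real (card ?I - 1) * (det_box a0 x0 a0 a x * (\<Sum>a'\<in>?O. P (a' @ w) (x0 @ v)))"
    using x by (simp add: sum.remove[of ?I x] card_Diff_singleton)
  then show ?thesis
    by simp
qed

lemma state_eq_tensor_combination:
  assumes P: "P \<in> states (X @ W)" and x0: "x0 \<in> inputs X"
    and c: "c \<in> outputs (X @ W)" and z: "z \<in> inputs (X @ W)"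
  shows "P c z =
    (\<Sum>x'\<in>inputs X. \<Sum>a'\<in>outputs X. tensor X (det_box a0 x' a') (\<lambda>w v. P (a' @ w) (x' @ v)) c z) -
    real (card (inputs X) - 1) *
      tensor X (det_box a0 x0 a0) (\<lambda>w v. \<Sum>a'\<in>outputs X. P (a' @ w) (x0 @ v)) c z"
proof -
  let ?n = "length X"
  have "take ?n c \<in> outputs X" "take ?n z \<in> inputs X" "drop ?n c \<in> outputs W" "drop ?n z \<in> inputs W"
    using take_drop_in_outputs[OF c] take_drop_in_inputs[OF z] by auto
  from state_decomposition[OF P x0 this, of a0] show ?thesis
    by (simp add: tensor_def)
qed

lemma pair_eq_0_single_box_step:
  assumes vanish: "\<And>p Q t. p \<in> states [B] \<Longrightarrow> scaled_state W Q t \<Longrightarrow> pair ([B] @ W) V (tensor [B] p Q) = 0"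
    and P: "P \<in> states ([B] @ W)"
  shows "pair ([B] @ W) V P = 0"
proof (cases "outputs [B] = {} \<or> inputs [B] = {}")
  case True
  then show ?thesis
    unfolding pair_append by auto
next
  case False
  then obtain a0 x0 where a0: "a0 \<in> outputs [B]" and x0: "x0 \<in> inputs [B]"
    by blast
  let ?Q = "\<lambda>x' a' w v. P (a' @ w) (x' @ v)" and ?PW = "\<lambda>w v. \<Sum>a'\<in>outputs [B]. P (a' @ w) (x0 @ v)"
  have "\<exists>t. scaled_state W ?PW t"
  proof (rule ex_scaled_state_if_no_signalling)
    show "0 \<le> ?PW w v" if "w \<in> outputs W" "v \<in> inputs W" for w v
    proof (rule sum_nonneg)
      fix a' assume "a' \<in> outputs [B]"
      then show "0 \<le> P (a' @ w) (x0 @ v)"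
        using P append_in_outputs[OF _ that(1)] append_in_inputs[OF x0 that(2)]
        unfolding states_iff_scaled_state scaled_state_def by blast
    qed
    show "no_signalling W ?PW"
      using P x0 by (intro no_signalling_sum no_signalling_slice_right)
        (simp_all add: states_iff_scaled_state scaled_state_def)
  qed
  then have PW_vanish: "pair ([B] @ W) V (tensor [B] (det_box a0 x0 a0) ?PW) = 0"
    using vanish det_box_in_states[OF a0 a0] by blast
  have Q_vanish: "pair ([B] @ W) V (tensor [B] (det_box a0 x' a') (?Q x' a')) = 0"
    if "x' \<in> inputs [B]" "a' \<in> outputs [B]" for x' a'
    using vanish det_box_in_states[OF a0 that(2)] scaled_state_slice_right[OF P that(2,1)] by blast
  have "pair ([B] @ W) V P = pair ([B] @ W) V (\<lambda>c z.
      (\<Sum>x'\<in>inputs [B]. \<Sum>a'\<in>outputs [B]. tensor [B] (det_box a0 x' a') (?Q x' a') c z) -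
      real (card (inputs [B]) - 1) * tensor [B] (det_box a0 x0 a0) ?PW c z)"
    by (rule pair_cong) (rule state_eq_tensor_combination[OF P x0])
  also have "\<dots> = (\<Sum>x'\<in>inputs [B]. \<Sum>a'\<in>outputs [B].
        pair ([B] @ W) V (tensor [B] (det_box a0 x' a') (?Q x' a'))) -
      real (card (inputs [B]) - 1) * pair ([B] @ W) V (tensor [B] (det_box a0 x0 a0) ?PW)"
    by (simp only: pair_diff pair_sum pair_scale)
  also have "\<dots> = 0"
    using Q_vanish PW_vanish by simp
  finally show ?thesis .
qed

lemma pair_eq_0_if_vanishes_on_product_states:
  assumes "\<And>p q. p \<in> states X \<Longrightarrow> q \<in> states Y \<Longrightarrow> pair (X @ Y) V (tensor X p q) = 0"
    and "P \<in> states (X @ Y)"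
  shows "pair (X @ Y) V P = 0"
  using assms
proof (induction X arbitrary: V P)
  case Nil
  have "tensor [] (\<lambda>a x. 1) P = P"
    by (simp add: tensor_def)
  moreover have "(\<lambda>a x. 1) \<in> states []"
    by (simp add: states_def no_signalling_def outputs_def inputs_def)
  ultimately show ?case
    using Nil.prems by (metis append_Nil)
next
  case (Cons B X)
  txt \<open>Peel off the first box and apply the induction hypothesis to the functional \<open>V\<close> partially
    evaluated on a state of that box.\<close>
  have "pair ([B] @ X @ Y) V (tensor [B] p Q) = 0" if p: "p \<in> states [B]" and Q: "scaled_state (X @ Y) Q t"
    for p Q t
  proof -
    define Vp where "Vp = (\<lambda>b y. \<Sum>a\<in>outputs [B]. \<Sum>x\<in>inputs [B]. V (a @ b) (x @ y) * p a x)"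
    have "pair (X @ Y) Vp (tensor X r s) = 0" if "r \<in> states X" "s \<in> states Y" for r s
    proof -
      have "pair (X @ Y) Vp (tensor X r s) = pair ([B] @ X @ Y) V (tensor [B] p (tensor X r s))"
        unfolding Vp_def by (rule pair_tensor_as_pair_right[symmetric])
      also have "\<dots> = pair (([B] @ X) @ Y) V (tensor ([B] @ X) (tensor [B] p r) s)"
        by (simp only: tensor_assoc append_assoc)
      also have "\<dots> = 0"
        using Cons.prems(1) tensor_in_states[OF p that(1)] that(2) by simp
      finally show ?thesis .
    qed
    then have "pair (X @ Y) Vp Q' = 0" if "Q' \<in> states (X @ Y)" for Q'
      using Cons.IH[of Vp Q'] that by blast
    then have "pair (X @ Y) Vp Q = 0"
      by (rule pair_scaled_state_eq_0[OF _ Q])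
    then show ?thesis
      unfolding Vp_def by (simp only: pair_tensor_as_pair_right)
  qed
  moreover have "P \<in> states ([B] @ X @ Y)"
    using Cons.prems(2) by simp
  ultimately have "pair ([B] @ X @ Y) V P = 0"
    by (rule pair_eq_0_single_box_step)
  then show ?case
    by simp
qed

lemma pair_eq_if_eq_on_product_states:
  assumes "\<And>p q. p \<in> states X \<Longrightarrow> q \<in> states Y \<Longrightarrow>
      pair (X @ Y) V (tensor X p q) = pair (X @ Y) V' (tensor X p q)"
    and "P \<in> states (X @ Y)"
  shows "pair (X @ Y) V P = pair (X @ Y) V' P"
  using pair_eq_0_if_vanishes_on_product_states[of X Y "\<lambda>c z. V c z - V' c z" P] assms
  by (simp add: pair_diff_vector)

section \<open>Maximally informative measurements\<close>

lemma is_effect_below: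
  assumes "is_effect sys \<mu>" and "represents sys W \<phi>" and "\<forall>p\<in>states sys. 0 \<le> \<phi> p \<and> \<phi> p \<le> \<mu> p"
  shows "is_effect sys \<phi>"
  using assms by (force simp: is_effect_def)

lemma is_effect_diff:
  assumes \<mu>: "is_effect sys \<mu>" and W: "represents sys W \<phi>"
    and below: "\<forall>p\<in>states sys. 0 \<le> \<phi> p \<and> \<phi> p \<le> \<mu> p"
  shows "is_effect sys (\<lambda>p. \<mu> p - \<phi> p)"
proof -
  obtain R where "represents sys R \<mu>"
    using \<mu> by (auto simp: is_effect_def)
  then have "represents sys (\<lambda>a x. R a x - W a x) (\<lambda>p. \<mu> p - \<phi> p)"
    using W by (rule represents_diff)
  then show ?thesis
    using \<mu> below by (fastforce simp: is_effect_def)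
qed

lemma refines_via_effect_le:
  assumes N: "measurement sys Ns \<nu>" and refines: "refines_via sys Ns \<nu> f Os \<mu>"
    and k: "k \<in> Ns" and p: "p \<in> states sys"
  shows "\<nu> k p \<le> \<mu> (f k) p"
proof -
  have "\<nu> k p \<le> (\<Sum>j\<in>{j\<in>Ns. f j = f k}. \<nu> j p)"
    using N k p by (intro member_le_sum) (auto simp: measurement_def is_effect_def)
  also have "\<dots> = \<mu> (f k) p"
    using refines k p by (simp add: refines_via_def)
  finally show ?thesis .
qed

text \<open>
  Outcome \<open>0\<close> of the refinement gets the effect \<open>\<phi>\<close>, and outcome \<open>Suc i\<close> the effect of the
  \<open>i\<close>-th outcome of the measurement, minus \<open>\<phi>\<close> if this is \<open>r\<close>.
\<close>

lemma refinement_splitting_off_effect: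
  fixes Os :: "'r set" and \<mu> :: "'r \<Rightarrow> vec \<Rightarrow> real"
  assumes M: "measurement sys Os \<mu>" and r: "r \<in> Os"
    and W: "represents sys W \<phi>" and below: "\<forall>p\<in>states sys. 0 \<le> \<phi> p \<and> \<phi> p \<le> \<mu> r p"
  obtains Ns :: "nat set" and \<nu> F where "measurement sys Ns \<nu>" "refines_via sys Ns \<nu> F Os \<mu>"
    and "0 \<in> Ns" "F 0 = r" "\<nu> 0 = \<phi>"
proof -
  have finite: "finite Os" and eff: "\<forall>r\<in>Os. is_effect sys (\<mu> r)"
    and total: "\<forall>p\<in>states sys. (\<Sum>r\<in>Os. \<mu> r p) = 1"
    using M by (auto simp: measurement_def)
  obtain n :: nat and g where "Os = g ` {i. i < n}" and "inj_on g {i. i < n}"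
    using finite_imp_nat_seg_image_inj_on[OF finite] by blast
  then have Os: "Os = g ` {..<n}" and inj: "inj_on g {..<n}"
    by (simp_all add: lessThan_def)
  have reindex: "(\<Sum>i<n. h (g i)) = (\<Sum>r'\<in>Os. h r')" for h :: "'r \<Rightarrow> real"
    by (simp add: Os sum.reindex[OF inj])
  define \<rho> where "\<rho> = (\<lambda>r' p. \<mu> r' p - (if r' = r then \<phi> p else 0))"
  define Ns where "Ns = {..<Suc n}"
  define \<nu> where "\<nu> = case_nat \<phi> (\<lambda>i. \<rho> (g i))"
  define F where "F = case_nat r g"
  have "is_effect sys (\<rho> r')" if "r' \<in> Os" for r'
  proof (cases "r' = r")
    case True
    then show ?thesis
      using is_effect_diff[OF _ W below] eff r by (simp add: \<rho>_def)
  next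
    case False
    then have "\<rho> r' = \<mu> r'"
      by (simp add: \<rho>_def fun_eq_iff)
    then show ?thesis
      using eff that by simp
  qed
  moreover have "is_effect sys \<phi>"
    using is_effect_below[OF _ W below] eff r by blast
  moreover have "(\<Sum>j\<in>Ns. \<nu> j p) = 1" if "p \<in> states sys" for p
  proof -
    have "(\<Sum>j\<in>Ns. \<nu> j p) = \<phi> p + (\<Sum>i<n. \<rho> (g i) p)"
      unfolding Ns_def sum.lessThan_Suc_shift by (simp add: \<nu>_def)
    also have "\<dots> = \<phi> p + (\<Sum>r'\<in>Os. \<rho> r' p)"
      using reindex[of "\<lambda>r'. \<rho> r' p"] by simp
    finally show ?thesis
      using total that r finite by (simp add: \<rho>_def sum_subtractf)
  qed
  ultimately have "measurement sys Ns \<nu>"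
    unfolding measurement_def using Os by (auto simp: Ns_def \<nu>_def split: nat.split)
  moreover have "refines_via sys Ns \<nu> F Os \<mu>"
    unfolding refines_via_def
  proof (intro conjI ballI)
    show "F j \<in> Os" if "j \<in> Ns" for j
      using that r by (auto simp: F_def Ns_def Os split: nat.split)
    fix r' p assume "r' \<in> Os" "p \<in> states sys"
    have "(\<Sum>j\<in>{j\<in>Ns. F j = r'}. \<nu> j p) = (\<Sum>j<Suc n. if F j = r' then \<nu> j p else 0)"
      unfolding Ns_def by (rule sum.inter_filter) simp
    also have "\<dots> = (if r = r' then \<phi> p else 0) + (\<Sum>i<n. if g i = r' then \<rho> (g i) p else 0)"
      unfolding sum.lessThan_Suc_shift by (simp add: F_def \<nu>_def cong: if_cong)
    also have "\<dots> = (if r = r' then \<phi> p else 0) + (\<Sum>r''\<in>Os. if r'' = r' then \<rho> r'' p else 0)"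
      using reindex[of "\<lambda>r''. if r'' = r' then \<rho> r'' p else 0"] by simp
    also have "\<dots> = \<mu> r' p"
      using \<open>r' \<in> Os\<close> finite by (simp add: \<rho>_def)
    finally show "\<mu> r' p = (\<Sum>j\<in>{j\<in>Ns. F j = r'}. \<nu> j p)" ..
  qed
  moreover have "0 \<in> Ns" "F 0 = r" "\<nu> 0 = \<phi>"
    by (simp_all add: Ns_def F_def \<nu>_def)
  ultimately show ?thesis
    using that by blast
qed

lemma max_informative_dominated_effect_proportional:
  assumes MI: "max_informative sys Os \<mu>" and r: "r \<in> Os"
    and W: "represents sys W \<phi>" and below: "\<forall>p\<in>states sys. 0 \<le> \<phi> p \<and> \<phi> p \<le> \<mu> r p"
  shows "\<exists>c. \<forall>p\<in>states sys. \<phi> p = c * \<mu> r p"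
proof -
  have M: "measurement sys Os \<mu>"
    using MI by (simp add: max_informative_def)
  obtain Ns :: "nat set" and \<nu> F where N: "measurement sys Ns \<nu>" "refines_via sys Ns \<nu> F Os \<mu>"
    and "0 \<in> Ns" "F 0 = r" "\<nu> 0 = \<phi>"
    using refinement_splitting_off_effect[OF M r W below] by blast
  moreover have "trivial_refinement sys Ns \<nu> F \<mu>"
    using MI N by (simp add: max_informative_def)
  ultimately show ?thesis
    unfolding trivial_refinement_def by metis
qed

section \<open>The product measurement\<close>

lemma no_signalling_partial_pair:
  assumes ns: "no_signalling (X @ Y) P"
  shows "no_signalling X (\<lambda>a x. pair Y S (\<lambda>b y. P (a @ b) (x @ y)))"
  unfolding no_signalling_def
proof (intro allI impI ballI)
  fix i a x x' assume h: "i < length X" "a \<in> outputs X" "x \<in> inputs X" "x' \<in> inputs X"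
    "\<forall>j. j \<noteq> i \<longrightarrow> x ! j = x' ! j"
  have "pair Y S (\<lambda>b y. \<Sum>c<snd (X ! i). P (a[i := c] @ b) (x @ y)) =
      pair Y S (\<lambda>b y. \<Sum>c<snd (X ! i). P (a[i := c] @ b) (x' @ y))"
  proof (rule pair_cong)
    fix b y assume "b \<in> outputs Y" "y \<in> inputs Y"
    from no_signallingD[OF no_signalling_slice_left[OF ns this] h]
    show "(\<Sum>c<snd (X ! i). P (a[i := c] @ b) (x @ y)) = (\<Sum>c<snd (X ! i). P (a[i := c] @ b) (x' @ y))"
      by simp
  qed
  then show "(\<Sum>c<snd (X ! i). pair Y S (\<lambda>b y. P (a[i := c] @ b) (x @ y))) =
      (\<Sum>c<snd (X ! i). pair Y S (\<lambda>b y. P (a[i := c] @ b) (x' @ y)))"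
    by (simp only: pair_sum)
qed

lemma pair_tensor_effects_nonneg:
  assumes \<mu>: "is_effect X \<mu>" "represents X R \<mu>" and \<nu>: "is_effect Y \<nu>" "represents Y S \<nu>"
    and P: "P \<in> states (X @ Y)"
  shows "0 \<le> pair (X @ Y) (tensor X R S) P"
proof -
  define g where "g = (\<lambda>a x. pair Y S (\<lambda>b y. P (a @ b) (x @ y)))"
  have "0 \<le> g a x" if "a \<in> outputs X" "x \<in> inputs X" for a x
    using scaled_state_slice_right[OF P that] effect_scaled_state_bounds[OF \<nu>] by (auto simp: g_def)
  moreover have "no_signalling X g"
    using P unfolding g_def
    by (intro no_signalling_partial_pair) (simp add: states_iff_scaled_state scaled_state_def)
  ultimately obtain t where "scaled_state X g t"
    using ex_scaled_state_if_no_signalling by blast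
  then have "0 \<le> pair X R g"
    using effect_scaled_state_bounds[OF \<mu>] by blast
  then show ?thesis
    by (simp add: g_def pair_tensor_vector)
qed

lemma inputs_nonempty_if_measurement:
  assumes M: "measurement X Os \<mu>" and R: "\<forall>r\<in>Os. represents X (R r) (\<mu> r)"
  shows "inputs X \<noteq> {}"
proof
  assume empty: "inputs X = {}"
  then have zero: "(\<lambda>a x. 0) \<in> states X"
    by (simp add: states_def)
  then have "\<mu> r (\<lambda>a x. 0) = 0" if "r \<in> Os" for r
    using R that empty by (simp add: represents_def pair_eq_sum_sum)
  moreover have "(\<Sum>r\<in>Os. \<mu> r (\<lambda>a x. 0)) = 1"
    using M zero by (simp add: measurement_def)
  ultimately show False
    by simp
qed

lemma pair_tensor_represented:
  assumes "represents X R \<mu>" "represents Y S \<nu>" "p \<in> states X" "q \<in> states Y"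
  shows "pair (X @ Y) (tensor X R S) (tensor X p q) = \<mu> p * \<nu> q"
  using assms by (simp add: pair_tensor_tensor represents_def)

lemma sum_pair_tensor_effects:
  assumes MX: "measurement X OX \<mu>" and R: "\<forall>r\<in>OX. represents X (R r) (\<mu> r)"
    and MY: "measurement Y OY \<nu>" and S: "\<forall>s\<in>OY. represents Y (S s) (\<nu> s)"
    and P: "P \<in> states (X @ Y)"
  shows "(\<Sum>(r, s)\<in>OX \<times> OY. pair (X @ Y) (tensor X (R r) (S s)) P) = 1"
proof -
  obtain x0 y0 where z0: "x0 @ y0 \<in> inputs (X @ Y)"
    using inputs_nonempty_if_measurement[OF MX R] inputs_nonempty_if_measurement[OF MY S]
      append_in_inputs by blast
  let ?T = "\<lambda>c z. \<Sum>(r, s)\<in>OX \<times> OY. tensor X (R r) (S s) c z"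
  let ?U = "\<lambda>c z. if z = x0 @ y0 then 1 else 0"
  have "pair (X @ Y) ?T (tensor X p q) = pair (X @ Y) ?U (tensor X p q)"
    if p: "p \<in> states X" and q: "q \<in> states Y" for p q
  proof -
    have "pair (X @ Y) ?T (tensor X p q) =
        (\<Sum>(r, s)\<in>OX \<times> OY. pair (X @ Y) (tensor X (R r) (S s)) (tensor X p q))"
      by (simp add: case_prod_unfold pair_sum_vector)
    also have "\<dots> = (\<Sum>(r, s)\<in>OX \<times> OY. \<mu> r p * \<nu> s q)"
      using R S p q by (intro sum.cong refl) (auto simp: pair_tensor_represented)
    also have "\<dots> = (\<Sum>r\<in>OX. \<mu> r p) * (\<Sum>s\<in>OY. \<nu> s q)"
      by (simp add: sum_product sum.cartesian_product)
    also have "\<dots> = 1"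
      using MX MY p q by (simp add: measurement_def)
    also have "\<dots> = pair (X @ Y) ?U (tensor X p q)"
      using tensor_in_states[OF p q] z0 by (simp add: pair_input_indicator states_def)
    finally show ?thesis .
  qed
  then have "pair (X @ Y) ?T P = pair (X @ Y) ?U P"
    using P by (rule pair_eq_if_eq_on_product_states)
  then show ?thesis
    using P z0 by (simp add: case_prod_unfold pair_sum_vector pair_input_indicator states_def)
qed

lemma measurement_prod_meas_effects:
  assumes MX: "measurement X OX \<mu>" and R: "\<forall>r\<in>OX. represents X (R r) (\<mu> r)"
    and MY: "measurement Y OY \<nu>" and S: "\<forall>s\<in>OY. represents Y (S s) (\<nu> s)"
  shows "measurement (X @ Y) (OX \<times> OY) (prod_meas_effects X Y R S)"
proof -
  have finite: "finite OX" "finite OY"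
    using MX MY by (simp_all add: measurement_def)
  have nonneg: "0 \<le> pair (X @ Y) (tensor X (R r) (S s)) P"
    if "(r, s) \<in> OX \<times> OY" "P \<in> states (X @ Y)" for r s P
    using MX MY R S that by (intro pair_tensor_effects_nonneg) (auto simp: measurement_def)
  have "pair (X @ Y) (tensor X (R r) (S s)) P \<le> 1"
    if "(r, s) \<in> OX \<times> OY" "P \<in> states (X @ Y)" for r s P
  proof -
    have "pair (X @ Y) (tensor X (R r) (S s)) P \<le>
        (\<Sum>(r, s)\<in>OX \<times> OY. pair (X @ Y) (tensor X (R r) (S s)) P)"
      using member_le_sum[of "(r, s)" "OX \<times> OY" "\<lambda>(r, s). pair (X @ Y) (tensor X (R r) (S s)) P"]
        that finite nonneg by auto
    then show ?thesis
      using sum_pair_tensor_effects[OF MX R MY S that(2)] by simp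
  qed
  with nonneg show ?thesis
    using finite sum_pair_tensor_effects[OF MX R MY S]
    by (auto simp: measurement_def is_effect_def represents_def prod_meas_effects_def case_prod_unfold)
qed

lemma proportional_in_each_argument:
  fixes h :: "'a \<Rightarrow> 'b \<Rightarrow> real"
  assumes left: "\<And>q. q \<in> B \<Longrightarrow> \<exists>c. \<forall>p\<in>A. h p q = c * f p"
    and right: "\<And>p. p \<in> A \<Longrightarrow> \<exists>d. \<forall>q\<in>B. h p q = d * g q"
  shows "\<exists>c. \<forall>p\<in>A. \<forall>q\<in>B. h p q = c * (f p * g q)"
proof (cases "\<exists>p0\<in>A. f p0 \<noteq> 0")
  case True
  then obtain p0 where p0: "p0 \<in> A" "f p0 \<noteq> 0"
    by blast
  obtain d where d: "\<forall>q\<in>B. h p0 q = d * g q"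
    using right[OF p0(1)] by blast
  have "h p q = d / f p0 * (f p * g q)" if p: "p \<in> A" and q: "q \<in> B" for p q
  proof -
    obtain c where c: "\<forall>p\<in>A. h p q = c * f p"
      using left[OF q] by blast
    then have "c = d * g q / f p0"
      using d p0 q by (metis nonzero_eq_divide_eq)
    then show ?thesis
      using c p by simp
  qed
  then show ?thesis
    by blast
next
  case False
  then have "h p q = 0 * (f p * g q)" if "p \<in> A" "q \<in> B" for p q
    using left[OF that(2)] that(1) by force
  then show ?thesis
    by blast
qed

lemma effect_below_product_effect_proportional_on_products:
  assumes MX: "max_informative X OX \<mu>" and r: "r \<in> OX" and R: "represents X R (\<mu> r)"
    and MY: "max_informative Y OY \<nu>" and s: "s \<in> OY" and S: "represents Y S (\<nu> s)"
    and V: "represents (X @ Y) V \<phi>" and nonneg: "\<forall>P\<in>states (X @ Y). 0 \<le> \<phi> P"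
    and below: "\<forall>P\<in>states (X @ Y). \<phi> P \<le> pair (X @ Y) (tensor X R S) P"
  shows "\<exists>c. \<forall>p\<in>states X. \<forall>q\<in>states Y. \<phi> (tensor X p q) = c * (\<mu> r p * \<nu> s q)"
proof -
  have bounds: "0 \<le> \<phi> (tensor X p q) \<and> \<phi> (tensor X p q) \<le> \<mu> r p \<and> \<phi> (tensor X p q) \<le> \<nu> s q"
    if p: "p \<in> states X" and q: "q \<in> states Y" for p q
  proof -
    have "0 \<le> \<phi> (tensor X p q)" "\<phi> (tensor X p q) \<le> \<mu> r p * \<nu> s q"
      using nonneg below tensor_in_states[OF p q] pair_tensor_represented[OF R S p q] by auto
    moreover have "0 \<le> \<mu> r p" "\<mu> r p \<le> 1" "0 \<le> \<nu> s q" "\<nu> s q \<le> 1"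
      using MX MY r s p q by (auto simp: max_informative_def measurement_def is_effect_def)
    then have "\<mu> r p * \<nu> s q \<le> \<mu> r p" "\<mu> r p * \<nu> s q \<le> \<nu> s q"
      by (simp_all add: mult_left_le mult_left_le_one_le)
    ultimately show ?thesis
      by linarith
  qed
  show ?thesis
  proof (rule proportional_in_each_argument)
    fix q assume q: "q \<in> states Y"
    show "\<exists>c. \<forall>p\<in>states X. \<phi> (tensor X p q) = c * \<mu> r p"
    proof (rule max_informative_dominated_effect_proportional[OF MX r])
      show "represents X (\<lambda>a x. \<Sum>b\<in>outputs Y. \<Sum>y\<in>inputs Y. V (a @ b) (x @ y) * q b y)
          (\<lambda>p. \<phi> (tensor X p q))"
        using V tensor_in_states q by (simp add: represents_def pair_tensor_as_pair_left)
      show "\<forall>p\<in>states X. 0 \<le> \<phi> (tensor X p q) \<and> \<phi> (tensor X p q) \<le> \<mu> r p"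
        using bounds q by blast
    qed
  next
    fix p assume p: "p \<in> states X"
    show "\<exists>d. \<forall>q\<in>states Y. \<phi> (tensor X p q) = d * \<nu> s q"
    proof (rule max_informative_dominated_effect_proportional[OF MY s])
      show "represents Y (\<lambda>b y. \<Sum>a\<in>outputs X. \<Sum>x\<in>inputs X. V (a @ b) (x @ y) * p a x)
          (\<lambda>q. \<phi> (tensor X p q))"
        using V tensor_in_states p by (simp add: represents_def pair_tensor_as_pair_right)
      show "\<forall>q\<in>states Y. 0 \<le> \<phi> (tensor X p q) \<and> \<phi> (tensor X p q) \<le> \<nu> s q"
        using bounds p by blast
    qed
  qed
qed

lemma effect_below_product_effect_proportional:
  assumes MX: "max_informative X OX \<mu>" and r: "r \<in> OX" and R: "represents X R (\<mu> r)"
    and MY: "max_informative Y OY \<nu>" and s: "s \<in> OY" and S: "represents Y S (\<nu> s)"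
    and \<phi>: "is_effect (X @ Y) \<phi>"
    and below: "\<forall>P\<in>states (X @ Y). \<phi> P \<le> pair (X @ Y) (tensor X R S) P"
  shows "\<exists>c. \<forall>P\<in>states (X @ Y). \<phi> P = c * pair (X @ Y) (tensor X R S) P"
proof -
  obtain V where V: "represents (X @ Y) V \<phi>" and nonneg: "\<forall>P\<in>states (X @ Y). 0 \<le> \<phi> P"
    using \<phi> by (auto simp: is_effect_def)
  obtain c where c: "\<forall>p\<in>states X. \<forall>q\<in>states Y. \<phi> (tensor X p q) = c * (\<mu> r p * \<nu> s q)"
    using effect_below_product_effect_proportional_on_products[OF MX r R MY s S V nonneg below] by blast
  have "pair (X @ Y) V P = pair (X @ Y) (\<lambda>u z. c * tensor X R S u z) P" if "P \<in> states (X @ Y)" for P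
  proof (rule pair_eq_if_eq_on_product_states[OF _ that])
    fix p q assume "p \<in> states X" "q \<in> states Y"
    then show "pair (X @ Y) V (tensor X p q) = pair (X @ Y) (\<lambda>u z. c * tensor X R S u z) (tensor X p q)"
      using V c tensor_in_states pair_tensor_represented[OF R S]
      by (simp add: represents_def pair_scale_vector)
  qed
  then show ?thesis
    using V by (auto simp: represents_def pair_scale_vector)
qed

theorem corollary4:
  fixes X Y :: system
    and OX :: "'r set" and \<mu> :: "'r \<Rightarrow> vec \<Rightarrow> real" and R :: "'r \<Rightarrow> vec"
    and OY :: "'s set" and \<nu> :: "'s \<Rightarrow> vec \<Rightarrow> real" and S :: "'s \<Rightarrow> vec"
  assumes "max_informative X OX \<mu>"
    and "\<forall>r\<in>OX. represents X (R r) (\<mu> r)"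
    and "max_informative Y OY \<nu>"
    and "\<forall>s\<in>OY. represents Y (S s) (\<nu> s)"
  shows "max_informative (X @ Y) (OX \<times> OY) (prod_meas_effects X Y R S)"
proof -
  note MX = assms(1) and R = assms(2) and MY = assms(3) and S = assms(4)
  have M: "measurement (X @ Y) (OX \<times> OY) (prod_meas_effects X Y R S)"
    using MX MY R S by (intro measurement_prod_meas_effects) (simp_all add: max_informative_def)
  show ?thesis
    unfolding max_informative_def
  proof (intro conjI allI impI M)
    fix Ns :: "nat set" and \<phi> f
    assume N: "measurement (X @ Y) Ns \<phi> \<and> refines_via (X @ Y) Ns \<phi> f (OX \<times> OY) (prod_meas_effects X Y R S)"
    show "trivial_refinement (X @ Y) Ns \<phi> f (prod_meas_effects X Y R S)"
      unfolding trivial_refinement_def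
    proof
      fix k assume k: "k \<in> Ns"
      obtain r s where fk: "f k = (r, s)" and r: "r \<in> OX" and s: "s \<in> OY"
        using N k by (force simp: refines_via_def)
      have "is_effect (X @ Y) (\<phi> k)"
        using N k by (simp add: measurement_def)
      moreover have "\<forall>P\<in>states (X @ Y). \<phi> k P \<le> pair (X @ Y) (tensor X (R r) (S s)) P"
        using N k refines_via_effect_le fk by (fastforce simp: prod_meas_effects_def)
      ultimately show "\<exists>c. \<forall>P\<in>states (X @ Y). \<phi> k P = c * prod_meas_effects X Y R S (f k) P"
        using effect_below_product_effect_proportional[OF MX r _ MY s] R S r s fk
        by (simp add: prod_meas_effects_def)
    qed
  qed
qed

end
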